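(* There is $\varepsilon_0>0$ such that for every $\varepsilon$ with $0<\varepsilon<\varepsilon_0$, every even $m\geq 2$ and every odd $l\geq 1$, Challenger has a winning strategy in the game $\Gamma_{\mathrm{OP}}(\mathbb M_l,\mathbb M_m,6,\varepsilon)$.
   Context: $\mathbb M_m$ denotes the algebra of complex $m\times m$ matrices with matrix multiplication, addition, scalar multiplication and adjoint $a^*$ (conjugate transpose); $1_m$ is the identity matrix. For a vector $\xi=(x_1,\dots,x_m)\in\mathbb C^m$, $\|\xi\|=\sqrt{\sum_i|x_i|^2}$, and the operator norm of $a\in\mathbb M_m$ is $\|a\|_{\mathrm{OP}}=\sup\{\|a\xi\|:\|\xi\|=1\}$. For $l,m,n\geq 1$ and $\varepsilon>0$, the game $\Gamma_{\mathrm{OP}}(\mathbb M_l,\mathbb M_m,n,\varepsilon)$ between Challenger and Duplicator lasts $n$ innings: in each inning Challenger chooses a matrix $x$ with $\|x\|_{\mathrm{OP}}\leq 1$ in one of $\mathbb M_l$, $\mathbb M_m$, and Duplicator responds with a matrix $x$ with $\|x\|_{\mathrm{OP}}\leq 1$ in the other algebra; thus in inning $j$ matrices $a_j\in\mathbb M_l$ and $b_j\in\mathbb M_m$ are determined (repetitions are allowed). After $n$ innings Duplicator wins iff for all $i,j,k\leq n$ and all complex numbers $y,z$ with $\max(|y|,|z|)\leq 1$, each of the quantities $\big|\|a_i\|_{\mathrm{OP}}-\|b_i\|_{\mathrm{OP}}\big|$, $\big|\|a_ia_j-a_k\|_{\mathrm{OP}}-\|b_ib_j-b_k\|_{\mathrm{OP}}\big|$,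 $\big|\|ya_i+za_j-a_k\|_{\mathrm{OP}}-\|yb_i+zb_j-b_k\|_{\mathrm{OP}}\big|$ and $\big|\|a_i^*-a_j\|_{\mathrm{OP}}-\|b_i^*-b_j\|_{\mathrm{OP}}\big|$ is at most $\varepsilon$; otherwise Challenger wins. A winning strategy for a player is a rule specifying that player's moves as a function of previous moves such that the player wins regardless of the opponent's play. *)

theory Defs
  imports Complex_Main "Jordan_Normal_Form.Schur_Decomposition"
begin

definition vnorm :: "complex vec \<Rightarrow> real" where
  "vnorm x = sqrt (\<Sum>i<dim_vec x. (cmod (x $ i))^2)"

definition op_norm :: "complex mat \<Rightarrow> real" where
  "op_norm a = Sup {vnorm (a *\<^sub>v x) | x. x \<in> carrier_vec (dim_col a) \<and> vnorm x = 1}"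

definition unit_ball :: "nat \<Rightarrow> complex mat set" where
  "unit_ball n = {x. x \<in> carrier_mat n n \<and> op_norm x \<le> 1}"

text \<open>Winning condition for Duplicator on a finished play, given as the list
  of pairs (a_j, b_j), a_j in M_l, b_j in M_m.\<close>
definition duplicator_wins :: "real \<Rightarrow> (complex mat \<times> complex mat) list \<Rightarrow> bool" where
  "duplicator_wins \<epsilon> p \<longleftrightarrow>
     (\<forall>i<length p. \<forall>j<length p. \<forall>k<length p. \<forall>y z :: complex.
        max (cmod y) (cmod z) \<le> 1 \<longrightarrow>
        (let ai = fst (p!i); aj = fst (p!j); ak = fst (p!k);
             bi = snd (p!i); bj = snd (p!j); bk = snd (p!k) in
         \<bar>op_norm ai - op_norm bi\<bar> \<le> \<epsilon> \<and>
         \<bar>op_norm (ai * aj - ak) - op_norm (bi * bj - bk)\<bar> \<le> \<epsilon> \<and>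
         \<bar>op_norm (y \<cdot>\<^sub>m ai + z \<cdot>\<^sub>m aj - ak) - op_norm (y \<cdot>\<^sub>m bi + z \<cdot>\<^sub>m bj - bk)\<bar> \<le> \<epsilon> \<and>
         \<bar>op_norm (mat_adjoint ai - aj) - op_norm (mat_adjoint bi - bj)\<bar> \<le> \<epsilon>))"

text \<open>A Challenger strategy maps the history of previous innings to a move:
  (True, x) means Challenger plays x in M_l, (False, x) means x in M_m.\<close>
type_synonym strategy = "(complex mat \<times> complex mat) list \<Rightarrow> bool \<times> complex mat"

definition legal_challenger_strategy :: "nat \<Rightarrow> nat \<Rightarrow> strategy \<Rightarrow> bool" where
  "legal_challenger_strategy l m \<sigma> \<longleftrightarrow>
     (\<forall>h. snd (\<sigma> h) \<in> unit_ball (if fst (\<sigma> h) then l else m))"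

definition consistent_play :: "nat \<Rightarrow> nat \<Rightarrow> nat \<Rightarrow> strategy \<Rightarrow> (complex mat \<times> complex mat) list \<Rightarrow> bool" where
  "consistent_play l m n \<sigma> p \<longleftrightarrow> length p = n \<and>
     (\<forall>j<n. let (side, x) = \<sigma> (take j p) in
        (if side then fst (p!j) = x \<and> snd (p!j) \<in> unit_ball m
                 else snd (p!j) = x \<and> fst (p!j) \<in> unit_ball l))"

definition challenger_wins_game :: "nat \<Rightarrow> nat \<Rightarrow> nat \<Rightarrow> real \<Rightarrow> bool" where
  "challenger_wins_game l m n \<epsilon> \<longleftrightarrow>
     (\<exists>\<sigma>. legal_challenger_strategy l m \<sigma> \<and>
        (\<forall>p. consistent_play l m n \<sigma> p \<longrightarrow> \<not> duplicator_wins \<epsilon> p))"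

end

theory Submission
  imports Defs "HOL-Analysis.L2_Norm"
begin

text \<open>Write m = 2k. Challenger plays 1 in M_l and then, in M_m, the identity, the projection p
  onto the first k coordinates, the partial isometry v with v*v = p and vv* = 1 - p, its adjoint v*,
  and 1 - p. Duplicator's answers f, P, u, w, R in M_l then satisfy f = 1, P + R = f, wu = P,
  uw = R, w = u* and P^2 = P up to \<epsilon>, so that u*u is close to P and uu* is close to 1 - P.
  This is impossible in odd dimension l. On the one hand, the Hermitian path
  K(t) = (1 - t)(1/2 - uu*) + t(u*u - 1/2) satisfies det K(1) = -det K(0), because l is odd and
  det (c - AB) = det (c - BA); its determinant is real, so some K(t) is singular.
  On the other hand, every K(t) is within 4\<epsilon> of M = P - 1/2, and M^2 is within \<epsilon> of 1/4,
  so 1/4 - M K(t) has norm below 1/4 and K(t) is invertible as soon as 7\<epsilon> < 1/4.\<close>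

lemma vnorm_L2: "vnorm x = L2_set (\<lambda>i. cmod (x $ i)) {..<dim_vec x}"
  unfolding vnorm_def L2_set_def by simp

lemma vnorm_nonneg [simp]: "0 \<le> vnorm x"
  unfolding vnorm_def by (simp add: sum_nonneg)

lemma vnorm_add:
  assumes "dim_vec y = dim_vec x"
  shows "vnorm (x + y) \<le> vnorm x + vnorm y"
proof -
  have "vnorm (x + y) = L2_set (\<lambda>i. cmod ((x + y) $ i)) {..<dim_vec x}"
    using assms by (simp add: vnorm_L2)
  also have "\<dots> \<le> L2_set (\<lambda>i. cmod (x $ i) + cmod (y $ i)) {..<dim_vec x}"
    using assms by (intro L2_set_mono) (auto intro: norm_triangle_ineq)
  also have "\<dots> \<le> vnorm x + vnorm y"
    using assms by (simp add: vnorm_L2 L2_set_triangle_ineq)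
  finally show ?thesis .
qed

lemma vnorm_smult: "vnorm (c \<cdot>\<^sub>v x) = cmod c * vnorm x"
proof -
  have "vnorm (c \<cdot>\<^sub>v x) = L2_set (\<lambda>i. cmod c * cmod (x $ i)) {..<dim_vec x}"
    unfolding vnorm_L2 by (intro L2_set_cong) (auto simp: norm_mult)
  also have "\<dots> = cmod c * vnorm x"
    by (simp add: vnorm_L2 L2_set_right_distrib)
  finally show ?thesis .
qed

lemma vnorm_index_le: "i < dim_vec x \<Longrightarrow> cmod (x $ i) \<le> vnorm x"
  unfolding vnorm_L2 by (rule member_le_L2_set) auto

lemma vnorm_pos:
  assumes "x \<in> carrier_vec n" "x \<noteq> 0\<^sub>v n"
  shows "0 < vnorm x"
proof (rule ccontr)
  assume "\<not> 0 < vnorm x"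
  then have "\<forall>i\<in>{..<dim_vec x}. cmod (x $ i) = 0"
    using vnorm_nonneg[of x] unfolding vnorm_L2 by (simp add: L2_set_eq_0_iff)
  then have "x = 0\<^sub>v n"
    using assms(1) by (intro eq_vecI) auto
  with assms(2) show False by simp
qed

lemma vnorm_unit_vec:
  assumes "i < n"
  shows "vnorm (unit_vec n i :: complex vec) = 1"
proof -
  have "(\<Sum>j<n. (cmod (unit_vec n i $ j))\<^sup>2) = (\<Sum>j<n. if j = i then 1 else 0)"
    using assms by (intro sum.cong) auto
  then show ?thesis
    using assms unfolding vnorm_def by simp
qed

lemma vnorm_mult_mat_vec_le_entry_sum:
  assumes "a \<in> carrier_mat r c" "x \<in> carrier_vec c" "vnorm x \<le> 1"
  shows "vnorm (a *\<^sub>v x) \<le> (\<Sum>i<r. \<Sum>j<c. cmod (a $$ (i,j)))"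
proof -
  have "vnorm (a *\<^sub>v x) \<le> (\<Sum>i<r. \<bar>cmod ((a *\<^sub>v x) $ i)\<bar>)"
    using assms unfolding vnorm_L2 by (metis L2_set_le_sum_abs carrier_matD(1) dim_mult_mat_vec)
  also have "\<dots> \<le> (\<Sum>i<r. \<Sum>j<c. cmod (a $$ (i,j)))"
  proof (intro sum_mono)
    fix i assume i: "i \<in> {..<r}"
    have "\<bar>cmod ((a *\<^sub>v x) $ i)\<bar> = cmod (\<Sum>j<c. a $$ (i,j) * x $ j)"
      using assms i by (simp add: scalar_prod_def atLeast0LessThan)
    also have "\<dots> \<le> (\<Sum>j<c. cmod (a $$ (i,j) * x $ j))"
      by (rule norm_sum)
    also have "\<dots> \<le> (\<Sum>j<c. cmod (a $$ (i,j)))"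
    proof (intro sum_mono)
      fix j assume "j \<in> {..<c}"
      then have "cmod (x $ j) \<le> 1"
        using assms vnorm_index_le[of j x] by auto
      then show "cmod (a $$ (i,j) * x $ j) \<le> cmod (a $$ (i,j))"
        by (simp add: norm_mult mult_left_le)
    qed
    finally show "\<bar>cmod ((a *\<^sub>v x) $ i)\<bar> \<le> (\<Sum>j<c. cmod (a $$ (i,j)))" .
  qed
  finally show ?thesis .
qed

lemma op_norm_set_bdd_above:
  assumes "a \<in> carrier_mat r c"
  shows "bdd_above {vnorm (a *\<^sub>v x) | x. x \<in> carrier_vec (dim_col a) \<and> vnorm x = 1}"
  unfolding bdd_above_def using vnorm_mult_mat_vec_le_entry_sum[OF assms] assms by fastforce

lemma mult_mat_vec_op_norm_le:
  assumes a: "a \<in> carrier_mat r c" and x: "x \<in> carrier_vec c"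
  shows "vnorm (a *\<^sub>v x) \<le> op_norm a * vnorm x"
proof (cases "x = 0\<^sub>v c")
  case True
  then have "a *\<^sub>v x = 0\<^sub>v r"
    using a by (intro eq_vecI) (auto simp: scalar_prod_def)
  then show ?thesis
    using True by (simp add: vnorm_def)
next
  case False
  define s where "s = vnorm x"
  have s: "0 < s"
    using vnorm_pos[OF x False] s_def by simp
  define y where "y = complex_of_real (1 / s) \<cdot>\<^sub>v x"
  have y: "y \<in> carrier_vec c" "vnorm y = 1"
    using x s unfolding y_def s_def by (auto simp: vnorm_smult norm_divide)
  have le: "vnorm (a *\<^sub>v y) \<le> op_norm a"
    unfolding op_norm_def using y a by (intro cSup_upper op_norm_set_bdd_above) auto
  have "a *\<^sub>v y = complex_of_real (1 / s) \<cdot>\<^sub>v (a *\<^sub>v x)"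
    unfolding y_def using a x by (rule mult_mat_vec)
  then have "vnorm (a *\<^sub>v x) = s * vnorm (a *\<^sub>v y)"
    using s by (simp add: vnorm_smult norm_divide)
  also have "\<dots> \<le> s * op_norm a"
    using le s by simp
  finally show ?thesis
    unfolding s_def by (simp add: mult.commute)
qed

lemma op_norm_le:
  assumes a: "a \<in> carrier_mat r c" and "0 < c"
    and bound: "\<And>x. x \<in> carrier_vec c \<Longrightarrow> vnorm (a *\<^sub>v x) \<le> K * vnorm x"
  shows "op_norm a \<le> K"
  unfolding op_norm_def
proof (rule cSup_least)
  have "unit_vec c 0 \<in> carrier_vec (dim_col a) \<and> vnorm (unit_vec c 0 :: complex vec) = 1"
    using a \<open>0 < c\<close> vnorm_unit_vec by auto
  then show "{vnorm (a *\<^sub>v x) | x. x \<in> carrier_vec (dim_col a) \<and> vnorm x = 1} \<noteq> {}"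
    by blast
next
  fix t assume "t \<in> {vnorm (a *\<^sub>v x) | x. x \<in> carrier_vec (dim_col a) \<and> vnorm x = 1}"
  then obtain x where "x \<in> carrier_vec c" "vnorm x = 1" "t = vnorm (a *\<^sub>v x)"
    using a by auto
  then show "t \<le> K"
    using bound[of x] by simp
qed

lemma op_norm_nonneg:
  assumes a: "a \<in> carrier_mat r c" and "0 < c"
  shows "0 \<le> op_norm a"
proof -
  have "vnorm (a *\<^sub>v unit_vec c 0) \<le> op_norm a"
    using mult_mat_vec_op_norm_le[OF a, of "unit_vec c 0"] vnorm_unit_vec[OF \<open>0 < c\<close>] by simp
  then show ?thesis
    using vnorm_nonneg[of "a *\<^sub>v unit_vec c 0"] by linarith
qed

lemma op_norm_zero_mat:
  assumes "0 < c"
  shows "op_norm (0\<^sub>m r c :: complex mat) = 0"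
proof -
  have "op_norm (0\<^sub>m r c :: complex mat) \<le> 0"
  proof (rule op_norm_le[OF zero_carrier_mat assms])
    fix x :: "complex vec" assume "x \<in> carrier_vec c"
    then have "0\<^sub>m r c *\<^sub>v x = 0\<^sub>v r"
      by (intro eq_vecI) (auto simp: scalar_prod_def)
    then show "vnorm (0\<^sub>m r c *\<^sub>v x) \<le> 0 * vnorm x"
      by (simp add: vnorm_def)
  qed
  with op_norm_nonneg[OF zero_carrier_mat assms] show ?thesis
    by (simp add: antisym)
qed

lemma op_norm_one_mat_le: "0 < n \<Longrightarrow> op_norm (1\<^sub>m n :: complex mat) \<le> 1"
  by (rule op_norm_le) auto

lemma op_norm_add_le:
  assumes A: "A \<in> carrier_mat r c" and B: "B \<in> carrier_mat r c" and "0 < c"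
  shows "op_norm (A + B) \<le> op_norm A + op_norm B"
proof (rule op_norm_le[OF _ \<open>0 < c\<close>])
  show "A + B \<in> carrier_mat r c"
    using A B by simp
  fix x :: "complex vec" assume x: "x \<in> carrier_vec c"
  have "vnorm ((A + B) *\<^sub>v x) = vnorm (A *\<^sub>v x + B *\<^sub>v x)"
    using add_mult_distrib_mat_vec[OF A B x] by simp
  also have "\<dots> \<le> vnorm (A *\<^sub>v x) + vnorm (B *\<^sub>v x)"
    using A B by (intro vnorm_add) simp
  also have "\<dots> \<le> (op_norm A + op_norm B) * vnorm x"
    using mult_mat_vec_op_norm_le[OF A x] mult_mat_vec_op_norm_le[OF B x]
    by (simp add: distrib_right)
  finally show "vnorm ((A + B) *\<^sub>v x) \<le> (op_norm A + op_norm B) * vnorm x" .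
qed

lemma op_norm_mult_le:
  assumes A: "A \<in> carrier_mat r k" and B: "B \<in> carrier_mat k c" and "0 < k" "0 < c"
  shows "op_norm (A * B) \<le> op_norm A * op_norm B"
proof (rule op_norm_le[OF _ \<open>0 < c\<close>])
  show "A * B \<in> carrier_mat r c"
    using A B by simp
  fix x :: "complex vec" assume x: "x \<in> carrier_vec c"
  have "vnorm ((A * B) *\<^sub>v x) = vnorm (A *\<^sub>v (B *\<^sub>v x))"
    using assoc_mult_mat_vec[OF A B x] by simp
  also have "\<dots> \<le> op_norm A * vnorm (B *\<^sub>v x)"
    using B x by (intro mult_mat_vec_op_norm_le[OF A]) simp
  also have "\<dots> \<le> op_norm A * (op_norm B * vnorm x)"
    using mult_mat_vec_op_norm_le[OF B x] op_norm_nonneg[OF A \<open>0 < k\<close>]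
    by (rule mult_left_mono)
  finally show "vnorm ((A * B) *\<^sub>v x) \<le> op_norm A * op_norm B * vnorm x"
    by (simp add: mult.assoc)
qed

lemma smult_mat_mult_mat_vec:
  assumes "A \<in> carrier_mat r c" "x \<in> carrier_vec c"
  shows "(k \<cdot>\<^sub>m A) *\<^sub>v x = k \<cdot>\<^sub>v (A *\<^sub>v x)"
  using assms by (intro eq_vecI) (auto simp: scalar_prod_def sum_distrib_left ac_simps)

lemma op_norm_smult_le:
  assumes A: "A \<in> carrier_mat r c" and "0 < c"
  shows "op_norm (k \<cdot>\<^sub>m A) \<le> cmod k * op_norm A"
proof (rule op_norm_le[OF _ \<open>0 < c\<close>])
  show "k \<cdot>\<^sub>m A \<in> carrier_mat r c"
    using A by simp
  fix x :: "complex vec" assume x: "x \<in> carrier_vec c"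
  show "vnorm ((k \<cdot>\<^sub>m A) *\<^sub>v x) \<le> cmod k * op_norm A * vnorm x"
    using mult_mat_vec_op_norm_le[OF A x]
    by (simp add: smult_mat_mult_mat_vec[OF A x] vnorm_smult mult.assoc mult_left_mono)
qed

lemma op_norm_minus_commute:
  assumes "A \<in> carrier_mat r c" "B \<in> carrier_mat r c" "0 < c"
  shows "op_norm (A - B) = op_norm (B - A)"
proof -
  have le: "op_norm (Y - X) \<le> op_norm (X - Y)"
    if "X \<in> carrier_mat r c" "Y \<in> carrier_mat r c" for X Y :: "complex mat"
  proof -
    have "Y - X = (-1) \<cdot>\<^sub>m (X - Y)"
      using that by (intro eq_matI) auto
    then show ?thesis
      using op_norm_smult_le[of "X - Y" r c "-1"] that \<open>0 < c\<close> by (simp add: minus_carrier_mat)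
  qed
  show ?thesis
    using le[OF assms(2,1)] le[OF assms(1,2)] by (rule antisym)
qed

lemma op_norm_diff_le:
  assumes "A \<in> carrier_mat r c" "B \<in> carrier_mat r c" "0 < c"
  shows "op_norm (A - B) \<le> op_norm A + op_norm B"
proof -
  have "A - B = A + (-1) \<cdot>\<^sub>m B"
    using assms by (intro eq_matI) auto
  then show ?thesis
    using op_norm_add_le[of A r c "(-1) \<cdot>\<^sub>m B"] op_norm_smult_le[of B r c "-1"] assms by simp
qed

lemma op_norm_diff_triangle:
  assumes "A \<in> carrier_mat r c" "B \<in> carrier_mat r c" "C \<in> carrier_mat r c" "0 < c"
  shows "op_norm (A - C) \<le> op_norm (A - B) + op_norm (B - C)"
proof -
  have "A - C = (A - B) + (B - C)"
    using assms by (intro eq_matI) auto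
  then show ?thesis
    using op_norm_add_le[of "A - B" r c "B - C"] assms by (simp add: minus_carrier_mat)
qed

lemma op_norm_segment_diff_le:
  assumes "A \<in> carrier_mat r c" "B \<in> carrier_mat r c" "M \<in> carrier_mat r c" "0 < c"
    and "0 \<le> t" "t \<le> 1"
  shows "op_norm (complex_of_real (1 - t) \<cdot>\<^sub>m A + complex_of_real t \<cdot>\<^sub>m B - M)
    \<le> (1 - t) * op_norm (A - M) + t * op_norm (B - M)"
proof -
  have "complex_of_real (1 - t) \<cdot>\<^sub>m A + complex_of_real t \<cdot>\<^sub>m B - M
      = complex_of_real (1 - t) \<cdot>\<^sub>m (A - M) + complex_of_real t \<cdot>\<^sub>m (B - M)"
    using assms by (intro eq_matI) (auto simp: algebra_simps)
  also have "op_norm \<dots> \<le> op_norm (complex_of_real (1 - t) \<cdot>\<^sub>m (A - M))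
      + op_norm (complex_of_real t \<cdot>\<^sub>m (B - M))"
    using assms by (intro op_norm_add_le) auto
  also have "\<dots> \<le> (1 - t) * op_norm (A - M) + t * op_norm (B - M)"
  proof (rule add_mono)
    have "cmod (complex_of_real (1 - t)) = 1 - t" "cmod (complex_of_real t) = t"
      using assms by (subst norm_of_real; simp)+
    then show "op_norm (complex_of_real (1 - t) \<cdot>\<^sub>m (A - M)) \<le> (1 - t) * op_norm (A - M)"
      and "op_norm (complex_of_real t \<cdot>\<^sub>m (B - M)) \<le> t * op_norm (B - M)"
      using op_norm_smult_le[of "A - M" r c "complex_of_real (1 - t)"]
        op_norm_smult_le[of "B - M" r c "complex_of_real t"] assms
      by (simp_all add: minus_carrier_mat)
  qed
  finally show ?thesis .
qed

lemma mat_adjoint_carrier [simp]: "A \<in> carrier_mat r c \<Longrightarrow> mat_adjoint A \<in> carrier_mat c r"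
  unfolding mat_adjoint_def by (auto simp: mat_of_rows_def)

lemma mat_adjoint_dim [simp]:
  "dim_row (mat_adjoint A) = dim_col A" "dim_col (mat_adjoint A) = dim_row A"
  unfolding mat_adjoint_def by (auto simp: mat_of_rows_def)

lemma mat_adjoint_index [simp]:
  fixes A :: "complex mat"
  shows "i < dim_col A \<Longrightarrow> j < dim_row A \<Longrightarrow> mat_adjoint A $$ (i, j) = cnj (A $$ (j, i))"
  unfolding mat_adjoint_def by (auto simp: mat_of_rows_def)

lemma mat_adjoint_mat_adjoint [simp]:
  fixes A :: "complex mat"
  shows "mat_adjoint (mat_adjoint A) = A"
  by (intro eq_matI) auto

lemma mat_adjoint_mult:
  fixes A B :: "complex mat"
  assumes "A \<in> carrier_mat r k" "B \<in> carrier_mat k c"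
  shows "mat_adjoint (A * B) = mat_adjoint B * mat_adjoint A"
  using assms by (intro eq_matI) (auto simp: scalar_prod_def ac_simps)

lemma mat_adjoint_minus:
  fixes A B :: "complex mat"
  assumes "A \<in> carrier_mat r c" "B \<in> carrier_mat r c"
  shows "mat_adjoint (A - B) = mat_adjoint A - mat_adjoint B"
  using assms by (intro eq_matI) auto

lemma mat_adjoint_smult_one:
  "mat_adjoint (k \<cdot>\<^sub>m 1\<^sub>m n) = cnj k \<cdot>\<^sub>m 1\<^sub>m n"
  by (intro eq_matI) auto

lemma hermitian_index:
  fixes K :: "complex mat"
  assumes "mat_adjoint K = K" "K \<in> carrier_mat n n" "i < n" "j < n"
  shows "cnj (K $$ (j, i)) = K $$ (i, j)"
  by (metis assms carrier_matD mat_adjoint_index)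

lemma det_hermitian_real:
  fixes K :: "complex mat"
  assumes K: "K \<in> carrier_mat n n" and herm: "mat_adjoint K = K"
  shows "det K \<in> \<real>"
proof -
  interpret cnj_hom: comm_ring_hom cnj
    by unfold_locales auto
  have "mat_adjoint K = transpose_mat (map_mat cnj K)"
    using K by (intro eq_matI) auto
  then have "det K = det (map_mat cnj K)"
    using herm det_transpose[of "map_mat cnj K" n] K by simp
  also have "\<dots> = cnj (det K)"
    by (rule cnj_hom.hom_det)
  finally show ?thesis
    by (metis Reals_cnj_iff)
qed

lemma det_smult_one_minus_mult_comm:
  fixes u v :: "complex mat"
  assumes u: "u \<in> carrier_mat n n" and v: "v \<in> carrier_mat n n" and c: "c \<noteq> 0"
  shows "det (c \<cdot>\<^sub>m 1\<^sub>m n - u * v) = det (c \<cdot>\<^sub>m 1\<^sub>m n - v * u)"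
proof -
  define E where "E = (1 / c) \<cdot>\<^sub>m (v * u)"
  define L where "L = four_block_mat (c \<cdot>\<^sub>m 1\<^sub>m n) (0\<^sub>m n n) v (1\<^sub>m n)"
  define R where "R = four_block_mat (1\<^sub>m n) ((1 / c) \<cdot>\<^sub>m u) (0\<^sub>m n n) (1\<^sub>m n - E)"
  have E: "E \<in> carrier_mat n n"
    unfolding E_def using u v by simp
  have "L * R = four_block_mat ((c \<cdot>\<^sub>m 1\<^sub>m n) * 1\<^sub>m n + 0\<^sub>m n n * 0\<^sub>m n n)
     ((c \<cdot>\<^sub>m 1\<^sub>m n) * ((1 / c) \<cdot>\<^sub>m u) + 0\<^sub>m n n * (1\<^sub>m n - E))
     (v * 1\<^sub>m n + 1\<^sub>m n * 0\<^sub>m n n) (v * ((1 / c) \<cdot>\<^sub>m u) + 1\<^sub>m n * (1\<^sub>m n - E))"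
    unfolding L_def R_def by (rule mult_four_block_mat) (use u v E in auto)
  also have "\<dots> = four_block_mat (c \<cdot>\<^sub>m 1\<^sub>m n) u v (1\<^sub>m n)"
  proof -
    have "(c \<cdot>\<^sub>m 1\<^sub>m n) * ((1 / c) \<cdot>\<^sub>m u) = c \<cdot>\<^sub>m (1\<^sub>m n * ((1 / c) \<cdot>\<^sub>m u))"
      using u by (intro mult_smult_assoc_mat) auto
    also have "\<dots> = u"
      using u c by (intro eq_matI) auto
    finally have "(c \<cdot>\<^sub>m 1\<^sub>m n) * ((1 / c) \<cdot>\<^sub>m u) = u" .
    moreover have "v * ((1 / c) \<cdot>\<^sub>m u) = E"
      unfolding E_def by (rule mult_smult_distrib[OF v u])
    moreover have "E + (1\<^sub>m n - E) = 1\<^sub>m n"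
      using E by (intro eq_matI) auto
    ultimately show ?thesis
      using u v E by (simp add: left_mult_zero_mat)
  qed
  finally have LR: "L * R = four_block_mat (c \<cdot>\<^sub>m 1\<^sub>m n) u v (1\<^sub>m n)" .
  have "det (c \<cdot>\<^sub>m 1\<^sub>m n - u * v) = det (four_block_mat (c \<cdot>\<^sub>m 1\<^sub>m n) u v (1\<^sub>m n))"
    using det_four_block_mat[of "c \<cdot>\<^sub>m 1\<^sub>m n" n u v "1\<^sub>m n"] u v by simp
  also have "\<dots> = det L * det R"
    unfolding LR[symmetric] L_def R_def using u v E by (intro det_mult) auto
  also have "det L = c ^ n"
    unfolding L_def using v by (subst det_four_block_mat_upper_right_zero[of _ n _ n]) auto
  also have "det R = det (1\<^sub>m n - E)"
    unfolding R_def using u E by (subst det_four_block_mat_lower_left_zero[of _ n _ n]) auto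
  also have "c ^ n * det (1\<^sub>m n - E) = det (c \<cdot>\<^sub>m (1\<^sub>m n - E))"
    using E by simp
  also have "c \<cdot>\<^sub>m (1\<^sub>m n - E) = c \<cdot>\<^sub>m 1\<^sub>m n - v * u"
    unfolding E_def using u v c by (intro eq_matI) (auto simp: field_simps)
  finally show ?thesis .
qed

lemma det_nonzero_if_near_scalar:
  fixes A :: "complex mat"
  assumes A: "A \<in> carrier_mat n n" and near: "op_norm (c \<cdot>\<^sub>m 1\<^sub>m n - A) < cmod c"
  shows "det A \<noteq> 0"
proof
  assume "det A = 0"
  then obtain x where x: "x \<in> carrier_vec n" "x \<noteq> 0\<^sub>v n" and Ax: "A *\<^sub>v x = 0\<^sub>v n"
    using det_0_iff_vec_prod_zero_field[OF A] by blast
  have Ac: "c \<cdot>\<^sub>m 1\<^sub>m n - A \<in> carrier_mat n n"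
    using A by auto
  have "(c \<cdot>\<^sub>m 1\<^sub>m n - A) *\<^sub>v x = c \<cdot>\<^sub>v x"
    using A x Ax
    by (simp add: minus_mult_distrib_mat_vec[of _ n n A] smult_mat_mult_mat_vec[of _ n n])
  then have "cmod c * vnorm x \<le> op_norm (c \<cdot>\<^sub>m 1\<^sub>m n - A) * vnorm x"
    using mult_mat_vec_op_norm_le[OF Ac x(1)] by (simp add: vnorm_smult)
  with near vnorm_pos[OF x] show False
    by (simp add: mult_le_cancel_right)
qed

lemma det_nonzero_if_near_approx_root:
  fixes M K :: "complex mat"
  assumes M: "M \<in> carrier_mat n n" and K: "K \<in> carrier_mat n n" and "0 < n"
    and near: "op_norm M * op_norm (M - K) + op_norm (M * M - c \<cdot>\<^sub>m 1\<^sub>m n) < cmod c"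
  shows "det K \<noteq> 0"
proof -
  have "c \<cdot>\<^sub>m 1\<^sub>m n - M * K = M * (M - K) - (M * M - c \<cdot>\<^sub>m 1\<^sub>m n)"
    using M K by (subst mult_minus_distrib_mat[OF M M K]) (intro eq_matI; auto)
  moreover have "M * (M - K) \<in> carrier_mat n n" "M * M - c \<cdot>\<^sub>m 1\<^sub>m n \<in> carrier_mat n n"
    using M K by auto
  ultimately have "op_norm (c \<cdot>\<^sub>m 1\<^sub>m n - M * K)
      \<le> op_norm (M * (M - K)) + op_norm (M * M - c \<cdot>\<^sub>m 1\<^sub>m n)"
    using op_norm_diff_le \<open>0 < n\<close> by metis
  also have "\<dots> \<le> op_norm M * op_norm (M - K) + op_norm (M * M - c \<cdot>\<^sub>m 1\<^sub>m n)"
    using op_norm_mult_le[OF M _ \<open>0 < n\<close> \<open>0 < n\<close>, of "M - K"] K by (simp add: minus_carrier_mat)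
  finally have "det (M * K) \<noteq> 0"
    using M K near by (intro det_nonzero_if_near_scalar[of _ n c]) auto
  then show ?thesis
    using det_mult[OF M K] by simp
qed

lemma continuous_on_det_segment:
  fixes K0 K1 :: "complex mat"
  assumes "K0 \<in> carrier_mat n n" "K1 \<in> carrier_mat n n"
  shows "continuous_on S (\<lambda>t. det (complex_of_real (1 - t) \<cdot>\<^sub>m K0 + complex_of_real t \<cdot>\<^sub>m K1))"
proof -
  have "det (complex_of_real (1 - t) \<cdot>\<^sub>m K0 + complex_of_real t \<cdot>\<^sub>m K1)
      = (\<Sum>p | p permutes {0..<n}. of_int (sign p) * (\<Prod>i = 0..<n.
          complex_of_real (1 - t) * K0 $$ (i, p i) + complex_of_real t * K1 $$ (i, p i)))" for t
    using assms by (auto simp: det_def'[of _ n] permutes_in_image intro!: sum.cong prod.cong)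
  then show ?thesis
    by (simp only:) (intro continuous_intros)
qed

lemma det_vanishes_on_hermitian_segment:
  fixes K0 K1 :: "complex mat"
  assumes K0: "K0 \<in> carrier_mat n n" "mat_adjoint K0 = K0"
    and K1: "K1 \<in> carrier_mat n n" "mat_adjoint K1 = K1"
    and opposite: "det K1 = - det K0"
  shows "\<exists>t\<in>{0..1}. det (complex_of_real (1 - t) \<cdot>\<^sub>m K0 + complex_of_real t \<cdot>\<^sub>m K1) = 0"
proof -
  define K where "K t = complex_of_real (1 - t) \<cdot>\<^sub>m K0 + complex_of_real t \<cdot>\<^sub>m K1" for t
  define g where "g t = Re (det (K t))" for t
  have det_K: "det (K t) = complex_of_real (g t)" for t
  proof -
    have "K t \<in> carrier_mat n n"
      unfolding K_def using K0 K1 by auto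
    moreover have "mat_adjoint (K t) = K t"
      unfolding K_def using K0 K1 by (intro eq_matI) (auto simp: hermitian_index)
    ultimately show ?thesis
      unfolding g_def by (simp add: det_hermitian_real)
  qed
  have "continuous_on {0..1} g"
    unfolding g_def K_def by (intro continuous_intros continuous_on_det_segment[OF K0(1) K1(1)])
  moreover have "g 1 = - g 0"
  proof -
    have "K 0 = K0" "K 1 = K1"
      unfolding K_def using K0 K1 by auto
    then show ?thesis
      unfolding g_def using opposite by simp
  qed
  ultimately obtain t where "0 \<le> t" "t \<le> 1" "g t = 0"
    using IVT'[of g 0 0 1] IVT2'[of g 1 0 0] by force
  then show ?thesis
    using det_K unfolding K_def by auto
qed

lemma odd_dim_det_vanishes_between_gram_mats:
  fixes u :: "complex mat"
  assumes u: "u \<in> carrier_mat n n" and "odd n"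
  shows "\<exists>t\<in>{0..1}. det (complex_of_real (1 - t) \<cdot>\<^sub>m ((1 / 2) \<cdot>\<^sub>m 1\<^sub>m n - u * mat_adjoint u)
    + complex_of_real t \<cdot>\<^sub>m (mat_adjoint u * u - (1 / 2) \<cdot>\<^sub>m 1\<^sub>m n)) = 0"
proof -
  let ?h = "(1 / 2) \<cdot>\<^sub>m 1\<^sub>m n :: complex mat"
  have U: "mat_adjoint u \<in> carrier_mat n n"
    using u by simp
  have grams: "u * mat_adjoint u \<in> carrier_mat n n" "mat_adjoint u * u \<in> carrier_mat n n"
    using u U by auto
  have "mat_adjoint (u * mat_adjoint u) = u * mat_adjoint u"
    and "mat_adjoint (mat_adjoint u * u) = mat_adjoint u * u"
    using mat_adjoint_mult[OF u U] mat_adjoint_mult[OF U u] by simp_all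
  then have herm: "mat_adjoint (?h - u * mat_adjoint u) = ?h - u * mat_adjoint u"
      "mat_adjoint (mat_adjoint u * u - ?h) = mat_adjoint u * u - ?h"
    using grams by (simp_all add: mat_adjoint_minus[of _ n n] mat_adjoint_smult_one)
  have "mat_adjoint u * u - ?h = (-1) \<cdot>\<^sub>m (?h - mat_adjoint u * u)"
    using grams by (intro eq_matI) auto
  then have "det (mat_adjoint u * u - ?h) = - det (?h - mat_adjoint u * u)"
    using u grams \<open>odd n\<close> by simp
  also have "det (?h - mat_adjoint u * u) = det (?h - u * mat_adjoint u)"
    using u U by (intro det_smult_one_minus_mult_comm) auto
  finally show ?thesis
    using grams herm by (intro det_vanishes_on_hermitian_segment) (auto simp: minus_carrier_mat)
qed

lemma half_shifted_square:
  fixes P :: "complex mat"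
  assumes P: "P \<in> carrier_mat n n"
  shows "(P - (1 / 2) \<cdot>\<^sub>m 1\<^sub>m n) * (P - (1 / 2) \<cdot>\<^sub>m 1\<^sub>m n) - (1 / 4) \<cdot>\<^sub>m 1\<^sub>m n = P * P - P"
proof -
  let ?h = "(1 / 2) \<cdot>\<^sub>m 1\<^sub>m n :: complex mat"
  have Ph: "P - ?h \<in> carrier_mat n n"
    using P by (simp add: minus_carrier_mat)
  have "(P - ?h) * (P - ?h) = P * (P - ?h) - ?h * (P - ?h)"
    using P by (intro minus_mult_distrib_mat) (auto simp: minus_carrier_mat)
  also have "P * (P - ?h) = P * P - P * ?h"
    using P by (intro mult_minus_distrib_mat) auto
  also have "P * ?h = (1 / 2) \<cdot>\<^sub>m P"
    using mult_smult_distrib[OF P one_carrier_mat] P by simp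
  also have "?h * (P - ?h) = (1 / 2) \<cdot>\<^sub>m (P - ?h)"
    using mult_smult_assoc_mat[OF one_carrier_mat Ph] Ph by simp
  finally show ?thesis
    using P by (intro eq_matI) (auto simp: field_simps)
qed

lemma even_dim_if_approx_partial_isometry:
  fixes u P :: "complex mat"
  assumes u: "u \<in> carrier_mat n n" and P: "P \<in> carrier_mat n n" and P_le: "op_norm P \<le> 1"
    and idem: "op_norm (P * P - P) \<le> \<delta>"
    and source: "op_norm (mat_adjoint u * u - P) \<le> \<alpha>"
    and range: "op_norm (u * mat_adjoint u - (1\<^sub>m n - P)) \<le> \<alpha>"
    and small: "3 / 2 * \<alpha> + \<delta> < 1 / 4"
  shows "even n"
proof (rule ccontr)
  assume "odd n"
  then have "0 < n"
    by (rule odd_pos)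
  define M where "M = P - (1 / 2) \<cdot>\<^sub>m 1\<^sub>m n"
  define K0 where "K0 = (1 / 2) \<cdot>\<^sub>m 1\<^sub>m n - u * mat_adjoint u"
  define K1 where "K1 = mat_adjoint u * u - (1 / 2) \<cdot>\<^sub>m 1\<^sub>m n"
  have M: "M \<in> carrier_mat n n" and K0: "K0 \<in> carrier_mat n n" and K1: "K1 \<in> carrier_mat n n"
    unfolding M_def K0_def K1_def using u P by (auto simp: minus_carrier_mat)
  obtain t where t: "0 \<le> t" "t \<le> 1"
    and singular: "det (complex_of_real (1 - t) \<cdot>\<^sub>m K0 + complex_of_real t \<cdot>\<^sub>m K1) = 0"
    using odd_dim_det_vanishes_between_gram_mats[OF u \<open>odd n\<close>] unfolding K0_def K1_def by auto
  define K where "K = complex_of_real (1 - t) \<cdot>\<^sub>m K0 + complex_of_real t \<cdot>\<^sub>m K1"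
  have K: "K \<in> carrier_mat n n"
    unfolding K_def using K0 K1 by auto
  have "K0 - M = (1\<^sub>m n - P) - u * mat_adjoint u" "K1 - M = mat_adjoint u * u - P"
    unfolding K0_def K1_def M_def using u P by auto
  then have "op_norm (K0 - M) \<le> \<alpha>" "op_norm (K1 - M) \<le> \<alpha>"
    using range source op_norm_minus_commute[of "1\<^sub>m n - P" n n "u * mat_adjoint u"] u P \<open>0 < n\<close>
    by (auto simp: minus_carrier_mat)
  then have "op_norm (K - M) \<le> \<alpha>"
    unfolding K_def using op_norm_segment_diff_le[OF K0 K1 M \<open>0 < n\<close> t] t
    by (smt (verit) convex_bound_le)
  moreover have "op_norm M \<le> 3 / 2"
    unfolding M_def using op_norm_diff_le[OF P _ \<open>0 < n\<close>, of "(1 / 2) \<cdot>\<^sub>m 1\<^sub>m n"]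
      op_norm_smult_le[OF one_carrier_mat \<open>0 < n\<close>, of "1 / 2"] op_norm_one_mat_le[OF \<open>0 < n\<close>] P_le
    by simp
  ultimately have "op_norm M * op_norm (M - K) \<le> 3 / 2 * \<alpha>"
    using op_norm_minus_commute[OF M K \<open>0 < n\<close>] op_norm_nonneg[OF M \<open>0 < n\<close>]
      op_norm_nonneg[of "K - M" n n] K M \<open>0 < n\<close>
    by (intro mult_mono) (auto simp: minus_carrier_mat)
  moreover have "op_norm (M * M - (1 / 4) \<cdot>\<^sub>m 1\<^sub>m n) \<le> \<delta>"
    unfolding M_def half_shifted_square[OF P] by (rule idem)
  ultimately have "op_norm M * op_norm (M - K) + op_norm (M * M - (1 / 4) \<cdot>\<^sub>m 1\<^sub>m n) < cmod (1 / 4)"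
    using small by simp
  then have "det K \<noteq> 0"
    by (rule det_nonzero_if_near_approx_root[OF M K \<open>0 < n\<close>])
  with singular show False
    unfolding K_def by simp
qed

lemma approx_partial_isometry_of_relations:
  fixes f P u w R :: "complex mat"
  assumes car: "f \<in> carrier_mat n n" "P \<in> carrier_mat n n" "u \<in> carrier_mat n n"
      "w \<in> carrier_mat n n" "R \<in> carrier_mat n n"
    and "0 < n" and u_le: "op_norm u \<le> 1"
    and f_one: "op_norm (f - 1\<^sub>m n) \<le> \<epsilon>"
    and sum: "op_norm (P + R - f) \<le> \<epsilon>"
    and wu: "op_norm (w * u - P) \<le> \<epsilon>"
    and uw: "op_norm (u * w - R) \<le> \<epsilon>"
    and adj: "op_norm (mat_adjoint u - w) \<le> \<epsilon>"
  shows "op_norm (mat_adjoint u * u - P) \<le> 2 * \<epsilon>"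
    and "op_norm (u * mat_adjoint u - (1\<^sub>m n - P)) \<le> 4 * \<epsilon>"
proof -
  note [simp] = minus_carrier_mat
  have U: "mat_adjoint u \<in> carrier_mat n n"
    using car by simp
  have "0 \<le> op_norm (mat_adjoint u - w)"
    using U car \<open>0 < n\<close> by (intro op_norm_nonneg) auto
  then have adj_u: "op_norm (mat_adjoint u - w) * op_norm u \<le> \<epsilon>"
    using adj u_le by (meson mult_left_le order_trans)
  have "op_norm (mat_adjoint u * u - w * u) \<le> op_norm (mat_adjoint u - w) * op_norm u"
    using minus_mult_distrib_mat[OF U car(4,3)] op_norm_mult_le[of "mat_adjoint u - w" n n u n]
      U car \<open>0 < n\<close>
    by simp
  then show "op_norm (mat_adjoint u * u - P) \<le> 2 * \<epsilon>"
    using op_norm_diff_triangle[of "mat_adjoint u * u" n n "w * u" P] U car wu adj_u \<open>0 < n\<close> by simp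
  have "op_norm (u * mat_adjoint u - u * w) \<le> op_norm u * op_norm (mat_adjoint u - w)"
    using mult_minus_distrib_mat[OF car(3) U car(4)] op_norm_mult_le[of u n n "mat_adjoint u - w" n]
      U car \<open>0 < n\<close>
    by simp
  then have "op_norm (u * mat_adjoint u - R) \<le> 2 * \<epsilon>"
    using op_norm_diff_triangle[of "u * mat_adjoint u" n n "u * w" R] U car uw adj_u \<open>0 < n\<close>
    by (simp add: mult.commute)
  moreover have "op_norm (R - (1\<^sub>m n - P)) \<le> 2 * \<epsilon>"
  proof -
    have "R - (1\<^sub>m n - P) = (P + R - f) + (f - 1\<^sub>m n)"
      using car by (intro eq_matI) auto
    then show ?thesis
      using op_norm_add_le[of "P + R - f" n n "f - 1\<^sub>m n"] car \<open>0 < n\<close> sum f_one by simp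
  qed
  ultimately show "op_norm (u * mat_adjoint u - (1\<^sub>m n - P)) \<le> 4 * \<epsilon>"
    using op_norm_diff_triangle[of "u * mat_adjoint u" n n R "1\<^sub>m n - P"] U car \<open>0 < n\<close> by simp
qed

definition partial_perm_mat :: "nat \<Rightarrow> nat set \<Rightarrow> (nat \<Rightarrow> nat) \<Rightarrow> complex mat" where
  "partial_perm_mat n S \<pi> = mat n n (\<lambda>(i, j). if i \<in> S \<and> j = \<pi> i then 1 else 0)"

lemma partial_perm_mat_carrier [simp]: "partial_perm_mat n S \<pi> \<in> carrier_mat n n"
  and partial_perm_mat_dim [simp]:
    "dim_row (partial_perm_mat n S \<pi>) = n" "dim_col (partial_perm_mat n S \<pi>) = n"
  and partial_perm_mat_index [simp]:
    "i < n \<Longrightarrow> j < n \<Longrightarrow> partial_perm_mat n S \<pi> $$ (i, j) = (if i \<in> S \<and> j = \<pi> i then 1 else 0)"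
  unfolding partial_perm_mat_def by auto

lemma partial_perm_mat_cong:
  assumes "\<And>i j. i < n \<Longrightarrow> j < n \<Longrightarrow> (i \<in> S \<and> j = \<pi> i) \<longleftrightarrow> (i \<in> T \<and> j = \<rho> i)"
  shows "partial_perm_mat n S \<pi> = partial_perm_mat n T \<rho>"
  using assms by (intro eq_matI) auto

lemma mat_adjoint_partial_perm_mat:
  assumes "\<And>i j. i < n \<Longrightarrow> j < n \<Longrightarrow> (j \<in> S \<and> i = \<pi> j) \<longleftrightarrow> (i \<in> T \<and> j = \<rho> i)"
  shows "mat_adjoint (partial_perm_mat n S \<pi>) = partial_perm_mat n T \<rho>"
  using assms by (intro eq_matI) auto

lemma partial_perm_mat_mult:
  assumes "\<pi> ` S \<subseteq> {..<n}"
  shows "partial_perm_mat n S \<pi> * partial_perm_mat n T \<rho>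
    = partial_perm_mat n {i \<in> S. \<pi> i \<in> T} (\<rho> \<circ> \<pi>)"
  using assms
  by (intro eq_matI) (auto simp: scalar_prod_def if_distrib[of "\<lambda>a. a * b" for b] cong: if_cong)

lemma partial_perm_mat_mult_vec_index:
  assumes "x \<in> carrier_vec n" "i < n" "\<pi> ` S \<subseteq> {..<n}"
  shows "(partial_perm_mat n S \<pi> *\<^sub>v x) $ i = (if i \<in> S then x $ \<pi> i else 0)"
  using assms
  by (auto simp: scalar_prod_def if_distrib[of "\<lambda>a. a * b" for b] cong: if_cong)

lemma partial_perm_mat_in_unit_ball:
  assumes "0 < n" "S \<subseteq> {..<n}" "inj_on \<pi> S" "\<pi> ` S \<subseteq> {..<n}"
  shows "partial_perm_mat n S \<pi> \<in> unit_ball n"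
  unfolding unit_ball_def
proof (intro CollectI conjI partial_perm_mat_carrier
    op_norm_le[OF partial_perm_mat_carrier \<open>0 < n\<close>])
  fix x :: "complex vec" assume x: "x \<in> carrier_vec n"
  have "(\<Sum>i<n. (cmod ((partial_perm_mat n S \<pi> *\<^sub>v x) $ i))\<^sup>2)
      = (\<Sum>i<n. if i \<in> S then (cmod (x $ \<pi> i))\<^sup>2 else 0)"
    using assms x
    by (intro sum.cong) (simp_all add: partial_perm_mat_mult_vec_index del: index_mult_mat_vec)
  also have "\<dots> = (\<Sum>i\<in>S. (cmod (x $ \<pi> i))\<^sup>2)"
    using assms by (simp add: sum.If_cases Int_absorb1)
  also have "\<dots> = (\<Sum>j\<in>\<pi> ` S. (cmod (x $ j))\<^sup>2)"
    using assms by (simp add: sum.reindex)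
  also have "\<dots> \<le> (\<Sum>j<n. (cmod (x $ j))\<^sup>2)"
    using assms by (intro sum_mono2) auto
  finally show "vnorm (partial_perm_mat n S \<pi> *\<^sub>v x) \<le> 1 * vnorm x"
    unfolding vnorm_def using x by simp
qed

definition lower_half_proj :: "nat \<Rightarrow> complex mat" where
  "lower_half_proj m = partial_perm_mat m {..<m div 2} id"

definition upper_half_proj :: "nat \<Rightarrow> complex mat" where
  "upper_half_proj m = partial_perm_mat m {m div 2..<m} id"

definition half_shift :: "nat \<Rightarrow> complex mat" where
  "half_shift m = partial_perm_mat m {m div 2..<m} (\<lambda>i. i - m div 2)"

lemma halving_mats_carrier:
  "lower_half_proj m \<in> carrier_mat m m" "upper_half_proj m \<in> carrier_mat m m"
  "half_shift m \<in> carrier_mat m m"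
  unfolding lower_half_proj_def upper_half_proj_def half_shift_def by simp_all

lemma mat_adjoint_half_shift:
  "even m \<Longrightarrow> mat_adjoint (half_shift m) = partial_perm_mat m {..<m div 2} (\<lambda>i. i + m div 2)"
  unfolding half_shift_def by (rule mat_adjoint_partial_perm_mat) auto

lemma half_shift_adjoint_mult:
  assumes "even m"
  shows "mat_adjoint (half_shift m) * half_shift m = lower_half_proj m"
  unfolding mat_adjoint_half_shift[OF assms] unfolding lower_half_proj_def half_shift_def
  by (subst partial_perm_mat_mult) (auto intro!: partial_perm_mat_cong)

lemma half_shift_mult_adjoint:
  assumes "even m"
  shows "half_shift m * mat_adjoint (half_shift m) = upper_half_proj m"
  unfolding mat_adjoint_half_shift[OF assms] unfolding upper_half_proj_def half_shift_def
  using assms by (subst partial_perm_mat_mult) (auto intro!: partial_perm_mat_cong elim!: evenE)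

lemma lower_half_proj_idem: "lower_half_proj m * lower_half_proj m = lower_half_proj m"
  unfolding lower_half_proj_def
  by (subst partial_perm_mat_mult) (auto intro!: partial_perm_mat_cong)

lemma one_mat_in_unit_ball: "0 < n \<Longrightarrow> 1\<^sub>m n \<in> unit_ball n"
  unfolding unit_ball_def using op_norm_one_mat_le by simp

lemma halving_mats_in_unit_ball:
  assumes "even m" "0 < m"
  shows "lower_half_proj m \<in> unit_ball m" "upper_half_proj m \<in> unit_ball m"
    "half_shift m \<in> unit_ball m" "mat_adjoint (half_shift m) \<in> unit_ball m"
  unfolding lower_half_proj_def upper_half_proj_def half_shift_def
    mat_adjoint_half_shift[OF \<open>even m\<close>, unfolded half_shift_def]
  using assms by (auto intro!: partial_perm_mat_in_unit_ball inj_on_diff_nat simp: inj_on_def)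

definition halving_strategy :: "nat \<Rightarrow> nat \<Rightarrow> strategy" where
  "halving_strategy l m h =
    (if length h = 0 then (True, 1\<^sub>m l)
     else if length h = 1 then (False, 1\<^sub>m m)
     else if length h = 2 then (False, lower_half_proj m)
     else if length h = 3 then (False, half_shift m)
     else if length h = 4 then (False, mat_adjoint (half_shift m))
     else (False, upper_half_proj m))"

lemma legal_halving_strategy:
  "0 < l \<Longrightarrow> even m \<Longrightarrow> 0 < m \<Longrightarrow> legal_challenger_strategy l m (halving_strategy l m)"
  unfolding legal_challenger_strategy_def halving_strategy_def
  using one_mat_in_unit_ball halving_mats_in_unit_ball by auto

lemma consistent_halving_play:
  assumes "consistent_play l m 6 (halving_strategy l m) p"
  obtains e f P u w R where
    "p = [(1\<^sub>m l, e), (f, 1\<^sub>m m), (P, lower_half_proj m), (u, half_shift m),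
      (w, mat_adjoint (half_shift m)), (R, upper_half_proj m)]"
    "e \<in> unit_ball m" "f \<in> unit_ball l" "P \<in> unit_ball l" "u \<in> unit_ball l"
    "w \<in> unit_ball l" "R \<in> unit_ball l"
proof -
  have len: "length p = 6"
    using assms unfolding consistent_play_def by simp
  then have p: "p = [p ! 0, p ! 1, p ! 2, p ! 3, p ! 4, p ! 5]"
    by (intro nth_equalityI) (auto simp: less_Suc_eq numeral_eq_Suc)
  have "\<And>j. j < 6 \<Longrightarrow> (let (side, x) = halving_strategy l m (take j p) in
      if side then fst (p ! j) = x \<and> snd (p ! j) \<in> unit_ball m
      else snd (p ! j) = x \<and> fst (p ! j) \<in> unit_ball l)"
    using assms unfolding consistent_play_def by blast
  from this[of 0] this[of 1] this[of 2] this[of 3] this[of 4] this[of 5] show ?thesis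
    using len
    by (intro that[of "snd (p ! 0)" "fst (p ! 1)" "fst (p ! 2)" "fst (p ! 3)" "fst (p ! 4)"
          "fst (p ! 5)"])
      (subst p; auto simp: halving_strategy_def prod_eq_iff)+
qed

lemma duplicator_winsD:
  assumes "duplicator_wins \<epsilon> p" "i < length p" "j < length p" "k < length p"
  shows "\<bar>op_norm (fst (p ! i) * fst (p ! j) - fst (p ! k))
      - op_norm (snd (p ! i) * snd (p ! j) - snd (p ! k))\<bar> \<le> \<epsilon>"
    and "\<And>y z. cmod y \<le> 1 \<Longrightarrow> cmod z \<le> 1 \<Longrightarrow>
      \<bar>op_norm (y \<cdot>\<^sub>m fst (p ! i) + z \<cdot>\<^sub>m fst (p ! j) - fst (p ! k))
      - op_norm (y \<cdot>\<^sub>m snd (p ! i) + z \<cdot>\<^sub>m snd (p ! j) - snd (p ! k))\<bar> \<le> \<epsilon>"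
    and "\<bar>op_norm (mat_adjoint (fst (p ! i)) - fst (p ! j))
      - op_norm (mat_adjoint (snd (p ! i)) - snd (p ! j))\<bar> \<le> \<epsilon>"
  using assms(2-4) assms(1)[unfolded duplicator_wins_def Let_def, rule_format, of i j k 0 0]
    assms(1)[unfolded duplicator_wins_def Let_def, rule_format, of i j k]
  by auto

lemma duplicator_loses_halving_play:
  assumes dw: "duplicator_wins \<epsilon> [(1\<^sub>m l, e), (f, 1\<^sub>m m), (P, lower_half_proj m), (u, half_shift m),
      (w, mat_adjoint (half_shift m)), (R, upper_half_proj m)]"
    and balls: "e \<in> unit_ball m" "f \<in> unit_ball l" "P \<in> unit_ball l" "u \<in> unit_ball l"
      "w \<in> unit_ball l" "R \<in> unit_ball l"
    and "even m" "0 < m" "0 < l" "\<epsilon> < 1 / 28"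
  shows "even l"
proof -
  have car: "e \<in> carrier_mat m m" "f \<in> carrier_mat l l" "P \<in> carrier_mat l l" "u \<in> carrier_mat l l"
      "w \<in> carrier_mat l l" "R \<in> carrier_mat l l"
    and le_one: "op_norm P \<le> 1" "op_norm u \<le> 1"
    using balls unfolding unit_ball_def by auto
  note rel = duplicator_winsD[OF dw, simplified]
  have "op_norm (f - 1\<^sub>m l) \<le> \<epsilon>"
    using rel(1)[of 1 0 0] car \<open>0 < m\<close> by (simp add: abs_le_iff op_norm_zero_mat)
  moreover have "op_norm (P + R - f) \<le> \<epsilon>"
  proof -
    have "1 \<cdot>\<^sub>m P + 1 \<cdot>\<^sub>m R - f = P + R - f"
      using car by (intro eq_matI) auto
    moreover have "1 \<cdot>\<^sub>m lower_half_proj m + 1 \<cdot>\<^sub>m upper_half_proj m - 1\<^sub>m m = 0\<^sub>m m m"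
      unfolding lower_half_proj_def upper_half_proj_def by (intro eq_matI) auto
    ultimately show ?thesis
      using rel(2)[of 2 5 1 1 1] \<open>0 < m\<close> by (simp add: abs_le_iff op_norm_zero_mat)
  qed
  moreover have "op_norm (w * u - P) \<le> \<epsilon>" "op_norm (u * w - R) \<le> \<epsilon>" "op_norm (P * P - P) \<le> \<epsilon>"
    using rel(1)[of 4 3 2] rel(1)[of 3 4 5] rel(1)[of 2 2 2] halving_mats_carrier[of m] \<open>0 < m\<close>
    by (simp_all add: abs_le_iff op_norm_zero_mat half_shift_adjoint_mult half_shift_mult_adjoint
        lower_half_proj_idem \<open>even m\<close>)
  moreover have "op_norm (mat_adjoint u - w) \<le> \<epsilon>"
    using rel(3)[of 3 4 0] mat_adjoint_carrier[OF halving_mats_carrier(3)[of m]] \<open>0 < m\<close>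
    by (simp add: abs_le_iff op_norm_zero_mat)
  ultimately have "op_norm (mat_adjoint u * u - P) \<le> 2 * \<epsilon>"
    and "op_norm (u * mat_adjoint u - (1\<^sub>m l - P)) \<le> 4 * \<epsilon>"
    using approx_partial_isometry_of_relations[OF car(2-6) \<open>0 < l\<close> le_one(2)] by auto
  moreover have "0 \<le> \<epsilon>"
    using \<open>op_norm (P * P - P) \<le> \<epsilon>\<close> op_norm_nonneg[of "P * P - P" l l] car \<open>0 < l\<close>
    by (simp add: minus_carrier_mat)
  ultimately show ?thesis
    using \<open>op_norm (P * P - P) \<le> \<epsilon>\<close> \<open>\<epsilon> < 1 / 28\<close>
    by (intro even_dim_if_approx_partial_isometry[OF car(4,3) le_one(1), of \<epsilon> "4 * \<epsilon>"]) auto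
qed

theorem theorem4:
  shows "\<exists>\<epsilon>0>0. \<forall>\<epsilon> m l. 0 < \<epsilon> \<and> \<epsilon> < \<epsilon>0 \<and> even m \<and> m \<ge> 2 \<and> odd l \<and> l \<ge> 1
           \<longrightarrow> challenger_wins_game l m 6 \<epsilon>"
proof (intro exI[of _ "1 / 28"] conjI allI impI)
  fix \<epsilon> :: real and m l :: nat
  assume "0 < \<epsilon> \<and> \<epsilon> < 1 / 28 \<and> even m \<and> m \<ge> 2 \<and> odd l \<and> l \<ge> 1"
  then have \<epsilon>: "\<epsilon> < 1 / 28" and m: "even m" "0 < m" and l: "odd l" "0 < l"
    by auto
  have "\<not> duplicator_wins \<epsilon> p" if play: "consistent_play l m 6 (halving_strategy l m) p" for p
  proof
    assume "duplicator_wins \<epsilon> p"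
    moreover obtain e f P u w R where
      "p = [(1\<^sub>m l, e), (f, 1\<^sub>m m), (P, lower_half_proj m), (u, half_shift m),
        (w, mat_adjoint (half_shift m)), (R, upper_half_proj m)]"
      and "e \<in> unit_ball m" "f \<in> unit_ball l" "P \<in> unit_ball l" "u \<in> unit_ball l"
        "w \<in> unit_ball l" "R \<in> unit_ball l"
      using consistent_halving_play[OF play] .
    ultimately have "even l"
      using duplicator_loses_halving_play m l(2) \<epsilon> by blast
    with l(1) show False
      by simp
  qed
  then show "challenger_wins_game l m 6 \<epsilon>"
    unfolding challenger_wins_game_def using legal_halving_strategy[OF l(2) m] by blast
qed simp

end
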